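(* Let $K$ be a commutative totally ordered quasi-field of characteristic $1$, and let $P,Q\in K[X_1,\dots,X_n]$. Suppose $x\in K^n$ is a zero of $P$ and that there exists a nonzero $R\in K[X_1,\dots,X_n]$ with $RP=RQ$. Then $x$ is also a zero of $Q$.
   Context: A quasi-field of characteristic $1$ (idempotent semifield) is a commutative semiring $K$ (with additive neutral $0$ and unit $1$) such that $1+1=1$ (hence $x+x=x$ for all $x$) and every nonzero element is invertible for multiplication. It is ordered by $a\le b$ iff $a+b=b$; totally ordered means this order is total, so $a+b=\max(a,b)$. A point $x\in K^n$ is a zero of $P\in K[X_1,\dots,X_n]$ if one can write $P=P_1+P_2$ where $P_1,P_2$ have disjoint sets of monomials and $P_1(x)=P_2(x)$; for totally ordered $K$ this means that $P(x)=0$ or that the maximum of the values of the monomials of $P$ at $x$ is attained by at least two distinct monomials. *)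

theory Defs
  imports "HOL-Library.Poly_Mapping"
begin

class quasi_field_char1 = comm_semiring_1 +
  assumes one_plus_one_idem: "1 + 1 = 1"
  assumes mult_inverse_exists: "x \<noteq> 0 \<Longrightarrow> \<exists>y. x * y = 1"

text \<open>Total order: a \<le> b iff a + b = b; totality means a + b \<in> {a, b}.\<close>
definition totally_ordered_qf :: "'a::quasi_field_char1 itself \<Rightarrow> bool" where
  "totally_ordered_qf _ \<longleftrightarrow> (\<forall>a b::'a. a + b = a \<or> a + b = b)"

type_synonym ('n, 'a) mpoly = "('n \<Rightarrow>\<^sub>0 nat) \<Rightarrow>\<^sub>0 'a"

definition mon_eval :: "('n::finite \<Rightarrow>\<^sub>0 nat) \<Rightarrow> ('n \<Rightarrow> 'a::comm_semiring_1) \<Rightarrow> 'a" where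
  "mon_eval m x = (\<Prod>i\<in>UNIV. x i ^ Poly_Mapping.lookup m i)"

definition peval :: "('n::finite, 'a::comm_semiring_1) mpoly \<Rightarrow> ('n \<Rightarrow> 'a) \<Rightarrow> 'a" where
  "peval P x = (\<Sum>m\<in>Poly_Mapping.keys P. Poly_Mapping.lookup P m * mon_eval m x)"

definition is_zero_of :: "('n::finite \<Rightarrow> 'a::comm_semiring_1) \<Rightarrow> ('n, 'a) mpoly \<Rightarrow> bool" where
  "is_zero_of x P \<longleftrightarrow> (\<exists>P1 P2. P = P1 + P2 \<and> Poly_Mapping.keys P1 \<inter> Poly_Mapping.keys P2 = {} \<and> peval P1 x = peval P2 x)"

end

theory Submission
  imports Defs "HOL-Library.Set_Algebras"
begin

(*
  Think of the coordinates of x that vanish as an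
  infinitesimal \<epsilon> and of every other coordinate as its (nonzero) value.  A monomial m then
  contributes a term c * \<epsilon>^d, where d is the degree of m in the vanishing variables and
  c \<noteq> 0 is the value of the term with those variables set to 1.  For a polynomial F \<noteq> 0 the
  dominant contributions have the least d (the "leading degree" of F at x) and, among
  those, the largest c (the "leading value"); the monomials realising both are the
  "leading monomials" of F at x.

  Two facts about it carry the proof:
  (1) the leading data is multiplicative: degrees add, values multiply, and the leading
      monomials of F * G form the Minkowski sum of those of F and of G;
  (2) x is a zero of F iff it is NOT the case that the leading degree is 0 and there is a
      unique leading monomial.
  Given R * P = R * Q with R \<noteq> 0 and x not a zero of Q, (1) and a cancellation law for
  Minkowski sums of finite sets of exponent vectors show that P has the same leading
  degree and the same single leading monomial as Q, so by (2) x is not a zero of P.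
*)


subsection \<open>The order of an idempotent semifield\<close>

text \<open>The natural order a \<preceq> b iff a + b = b; under totality a + b is the maximum.\<close>

definition qle :: "'a::quasi_field_char1 \<Rightarrow> 'a \<Rightarrow> bool" (infix \<open>\<preceq>\<close> 50) where
  "a \<preceq> b \<longleftrightarrow> a + b = b"

lemma add_idem: "(a::'a::quasi_field_char1) + a = a"
  by (metis distrib_left mult_1_right one_plus_one_idem)

lemma qle_trans: "(a::'a::quasi_field_char1) \<preceq> b \<Longrightarrow> b \<preceq> c \<Longrightarrow> a \<preceq> c"
  unfolding qle_def by (metis add.assoc)

lemma qle_antisym: "(a::'a::quasi_field_char1) \<preceq> b \<Longrightarrow> b \<preceq> a \<Longrightarrow> a = b"
  unfolding qle_def by (metis add.commute)

lemma qle_add_left: "(a::'a::quasi_field_char1) \<preceq> a + b"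
  unfolding qle_def by (metis add.assoc add_idem)

lemma qle_add_right: "(b::'a::quasi_field_char1) \<preceq> a + b"
  by (metis qle_add_left add.commute)

lemma zero_qle: "0 \<preceq> (a::'a::quasi_field_char1)"
  by (simp add: qle_def)

lemma qle_mult_right: "(a::'a::quasi_field_char1) \<preceq> b \<Longrightarrow> a * c \<preceq> b * c"
  unfolding qle_def by (metis distrib_right)

lemma qle_mult_mono: "(a::'a::quasi_field_char1) \<preceq> b \<Longrightarrow> a' \<preceq> b' \<Longrightarrow> a * a' \<preceq> b * b'"
  by (metis qle_mult_right qle_trans mult.commute)

lemma qle_sum: "finite S \<Longrightarrow> i \<in> S \<Longrightarrow> f i \<preceq> (sum f S :: 'a::quasi_field_char1)"
proof (induction S rule: finite_induct)
  case (insert j S)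
  then show ?case by (auto simp: qle_add_left qle_add_right intro: qle_trans)
qed simp

lemma sum_qle: "(\<And>i. i \<in> S \<Longrightarrow> f i \<preceq> c) \<Longrightarrow> sum f S \<preceq> (c::'a::quasi_field_char1)"
proof (induction S rule: infinite_finite_induct)
  case (insert j S)
  then show ?case by (simp add: qle_def) (metis add.assoc)
qed (simp_all add: zero_qle)

lemma mult_right_cancel: "(c::'a::quasi_field_char1) \<noteq> 0 \<Longrightarrow> a * c = b * c \<Longrightarrow> a = b"
  by (metis mult_inverse_exists mult.assoc mult_1_right)

lemma mult_nonzero: "(a::'a::quasi_field_char1) \<noteq> 0 \<Longrightarrow> b \<noteq> 0 \<Longrightarrow> a * b \<noteq> 0"
  by (metis mult_right_cancel mult_zero_left)

lemma prod_nonzero: "(\<And>i. i \<in> S \<Longrightarrow> f i \<noteq> 0) \<Longrightarrow> prod f S \<noteq> (0::'a::quasi_field_char1)"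
  by (induction S rule: infinite_finite_induct) (auto simp: mult_nonzero)

lemma sum_nonzero: "finite S \<Longrightarrow> i \<in> S \<Longrightarrow> f i \<noteq> 0 \<Longrightarrow> sum f S \<noteq> (0::'a::quasi_field_char1)"
  by (metis qle_sum qle_def add_0_right)

lemma sum_attained:
  fixes f :: "'i \<Rightarrow> 'a::quasi_field_char1"
  assumes "totally_ordered_qf TYPE('a)" and "finite S" and "S \<noteq> {}"
  shows "\<exists>i\<in>S. sum f S = f i"
  using assms(2,3)
proof (induction S rule: finite_ne_induct)
  case (insert j S)
  then obtain i where i: "i \<in> S" "sum f S = f i" by blast
  have "sum f (insert j S) = f j + f i" using insert.hyps i by simp
  moreover have "f j + f i = f j \<or> f j + f i = f i" using assms(1) by (simp add: totally_ordered_qf_def)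
  ultimately show ?case using i by auto
qed simp

lemma qle_mult_eq:
  fixes a A b B :: "'a::quasi_field_char1"
  assumes "a \<preceq> A" "b \<preceq> B" "A \<noteq> 0" "B \<noteq> 0" "a * b = A * B"
  shows "a = A \<and> b = B"
proof -
  have "a * b \<preceq> A * b" using assms(1) by (rule qle_mult_right)
  moreover have "A * b \<preceq> A * B" using qle_mult_right[OF assms(2), of A] by (simp add: mult.commute)
  ultimately have "A * b = A * B" using assms(5) qle_antisym by metis
  then have "b = B" using mult_right_cancel[OF assms(3)] by (metis mult.commute)
  then show ?thesis using assms(4,5) mult_right_cancel by metis
qed


definition factorizations :: "('m::monoid_add \<Rightarrow>\<^sub>0 'a::zero) \<Rightarrow> ('m \<Rightarrow>\<^sub>0 'a) \<Rightarrow> 'm \<Rightarrow> ('m \<times> 'm) set" where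
  "factorizations F G k = {(a, b). a \<in> Poly_Mapping.keys F \<and> b \<in> Poly_Mapping.keys G \<and> a + b = k}"

lemma finite_factorizations: "finite (factorizations F G k)"
  by (rule finite_subset[of _ "Poly_Mapping.keys F \<times> Poly_Mapping.keys G"]) (auto simp: factorizations_def)

lemma lookup_mult_factorizations:
  fixes F G :: "'m::monoid_add \<Rightarrow>\<^sub>0 'a::semiring_0"
  shows "Poly_Mapping.lookup (F * G) k = (\<Sum>(a, b)\<in>factorizations F G k. Poly_Mapping.lookup F a * Poly_Mapping.lookup G b)"
proof -
  have "Poly_Mapping.lookup (F * G) k = (\<Sum>(a, b). Poly_Mapping.lookup F a * Poly_Mapping.lookup G b when k = a + b)"
    unfolding times_poly_mapping.rep_eq by (rule prod_fun_unfold_prod) (simp_all flip: in_keys_iff)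
  also have "\<dots> = (\<Sum>(a, b)\<in>Poly_Mapping.keys F \<times> Poly_Mapping.keys G. Poly_Mapping.lookup F a * Poly_Mapping.lookup G b when k = a + b)"
    by (rule Sum_any.expand_superset) (auto simp: in_keys_iff)
  also have "\<dots> = (\<Sum>(a, b)\<in>factorizations F G k. Poly_Mapping.lookup F a * Poly_Mapping.lookup G b)"
    by (rule sum.mono_neutral_cong_right) (auto simp: factorizations_def when_def split: if_splits)
  finally show ?thesis .
qed


definition zdeg :: "('n::finite \<Rightarrow> 'a::zero) \<Rightarrow> ('n \<Rightarrow>\<^sub>0 nat) \<Rightarrow> nat" where
  "zdeg x m = (\<Sum>i\<in>{i. x i = 0}. Poly_Mapping.lookup m i)"

definition unvanish :: "('n \<Rightarrow> 'a::zero_neq_one) \<Rightarrow> 'n \<Rightarrow> 'a" where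
  "unvanish x = (\<lambda>i. if x i = 0 then 1 else x i)"

lemma zdeg_add: "zdeg x (a + b) = zdeg x a + zdeg x b"
  by (simp add: zdeg_def lookup_add sum.distrib)

lemma mon_eval_add: "mon_eval (a + b) y = mon_eval a y * mon_eval b y"
  by (simp add: mon_eval_def lookup_add power_add prod.distrib)

lemma mon_eval_unvanish_nonzero: "mon_eval m (unvanish x) \<noteq> (0::'a::quasi_field_char1)"
proof -
  have "a \<noteq> 0 \<Longrightarrow> a ^ k \<noteq> 0" for a :: 'a and k
    by (induction k) (auto simp: mult_nonzero)
  then show ?thesis unfolding mon_eval_def by (intro prod_nonzero) (auto simp: unvanish_def)
qed

lemma mon_eval_vanishing:
  "mon_eval m x = (if zdeg x m = 0 then mon_eval m (unvanish x) else (0::'a::quasi_field_char1))"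
proof (cases "zdeg x m = 0")
  case True
  then have "Poly_Mapping.lookup m i = 0" if "x i = 0" for i using that by (simp add: zdeg_def)
  then show ?thesis using True unfolding mon_eval_def by (auto intro: prod.cong simp: unvanish_def)
next
  case False
  then obtain i where "x i = 0" "Poly_Mapping.lookup m i \<noteq> 0" by (auto simp: zdeg_def)
  then have "x i ^ Poly_Mapping.lookup m i = 0" by (simp add: zero_power)
  then have "mon_eval m x = 0" unfolding mon_eval_def by (intro prod_zero) auto
  with False show ?thesis by simp
qed


subsection \<open>The leading data of a polynomial at a point\<close>

definition term_value :: "('n::finite \<Rightarrow> 'a::comm_semiring_1) \<Rightarrow> ('n, 'a) mpoly \<Rightarrow> ('n \<Rightarrow>\<^sub>0 nat) \<Rightarrow> 'a" where
  "term_value x F m = Poly_Mapping.lookup F m * mon_eval m x"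

text \<open>The "reduced" value of that term: the coefficient c of \<epsilon>^(zdeg x m) when the
  vanishing coordinates are replaced by \<epsilon>.\<close>

definition rterm :: "('n::finite \<Rightarrow> 'a::quasi_field_char1) \<Rightarrow> ('n, 'a) mpoly \<Rightarrow> ('n \<Rightarrow>\<^sub>0 nat) \<Rightarrow> 'a" where
  "rterm x F m = Poly_Mapping.lookup F m * mon_eval m (unvanish x)"

definition lead_deg :: "('n::finite \<Rightarrow> 'a::quasi_field_char1) \<Rightarrow> ('n, 'a) mpoly \<Rightarrow> nat" where
  "lead_deg x F = Min (zdeg x ` Poly_Mapping.keys F)"

definition lead_val :: "('n::finite \<Rightarrow> 'a::quasi_field_char1) \<Rightarrow> ('n, 'a) mpoly \<Rightarrow> 'a" where
  "lead_val x F = (\<Sum>m\<in>{m\<in>Poly_Mapping.keys F. zdeg x m = lead_deg x F}. rterm x F m)"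

definition lead_mons :: "('n::finite \<Rightarrow> 'a::quasi_field_char1) \<Rightarrow> ('n, 'a) mpoly \<Rightarrow> ('n \<Rightarrow>\<^sub>0 nat) set" where
  "lead_mons x F = {m\<in>Poly_Mapping.keys F. zdeg x m = lead_deg x F \<and> rterm x F m = lead_val x F}"

lemma term_value_rterm: "term_value x F m = (if zdeg x m = 0 then rterm x F m else 0)"
  by (simp add: term_value_def rterm_def mon_eval_vanishing)

lemma rterm_nonzero: "m \<in> Poly_Mapping.keys F \<Longrightarrow> rterm x F m \<noteq> 0"
  by (simp add: rterm_def mult_nonzero mon_eval_unvanish_nonzero in_keys_iff)

lemma lead_deg_le: "m \<in> Poly_Mapping.keys F \<Longrightarrow> lead_deg x F \<le> zdeg x m"
  unfolding lead_deg_def by (rule Min_le) auto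

lemma lead_deg_attained: "F \<noteq> 0 \<Longrightarrow> \<exists>m\<in>Poly_Mapping.keys F. zdeg x m = lead_deg x F"
  unfolding lead_deg_def using Min_in[of "zdeg x ` Poly_Mapping.keys F"] by fastforce

lemma lead_val_nonzero: "F \<noteq> 0 \<Longrightarrow> lead_val x F \<noteq> 0"
proof -
  assume "F \<noteq> 0"
  then obtain m where m: "m \<in> {m\<in>Poly_Mapping.keys F. zdeg x m = lead_deg x F}"
    using lead_deg_attained by blast
  then show ?thesis
    unfolding lead_val_def using rterm_nonzero[of m F x] by (intro sum_nonzero[OF _ m]) auto
qed

lemma rterm_le_lead_val: "m \<in> Poly_Mapping.keys F \<Longrightarrow> zdeg x m = lead_deg x F \<Longrightarrow> rterm x F m \<preceq> lead_val x F"
  unfolding lead_val_def by (rule qle_sum) auto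

lemma lead_mons_zero: "lead_mons x 0 = {}"
  by (simp add: lead_mons_def)

lemma lead_mons_keys: "lead_mons x F \<subseteq> Poly_Mapping.keys F"
  unfolding lead_mons_def by auto

lemma finite_lead_mons: "finite (lead_mons x F)"
  using lead_mons_keys finite_keys by (rule finite_subset)

lemma lead_mons_nonempty:
  assumes "totally_ordered_qf TYPE('a)" and "(F::('n::finite, 'a::quasi_field_char1) mpoly) \<noteq> 0"
  shows "lead_mons x F \<noteq> {}"
proof -
  let ?S = "{m\<in>Poly_Mapping.keys F. zdeg x m = lead_deg x F}"
  have "?S \<noteq> {}" using lead_deg_attained[OF assms(2)] by blast
  then obtain m where "m \<in> ?S" "lead_val x F = rterm x F m"
    using sum_attained[OF assms(1), of ?S "rterm x F"] unfolding lead_val_def by auto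
  then show ?thesis unfolding lead_mons_def by auto
qed


subsection \<open>Multiplicativity of the leading data\<close>

lemma rterm_mult:
  "rterm x (F * G) k = (\<Sum>(a, b)\<in>factorizations F G k. rterm x F a * rterm x G b)"
proof -
  have "rterm x (F * G) k =
      (\<Sum>(a, b)\<in>factorizations F G k. Poly_Mapping.lookup F a * Poly_Mapping.lookup G b * mon_eval k (unvanish x))"
    by (simp add: rterm_def lookup_mult_factorizations sum_distrib_right case_prod_unfold)
  also have "\<dots> = (\<Sum>(a, b)\<in>factorizations F G k. rterm x F a * rterm x G b)"
    by (rule sum.cong) (auto simp: factorizations_def rterm_def mon_eval_add mult_ac)
  finally show ?thesis .
qed

lemma lead_deg_le_mult: "m \<in> Poly_Mapping.keys (F * G) \<Longrightarrow> lead_deg x F + lead_deg x G \<le> zdeg x m"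
proof -
  assume "m \<in> Poly_Mapping.keys (F * G)"
  then have "factorizations F G m \<noteq> {}"
    by (auto simp: in_keys_iff lookup_mult_factorizations)
  then obtain a b where "a \<in> Poly_Mapping.keys F" "b \<in> Poly_Mapping.keys G" "m = a + b"
    unfolding factorizations_def by auto
  then show ?thesis using lead_deg_le[of a F x] lead_deg_le[of b G x] by (simp add: zdeg_add)
qed

lemma factorization_lead_deg:
  assumes "(a, b) \<in> factorizations F G m" and "zdeg x m = lead_deg x F + lead_deg x G"
  shows "zdeg x a = lead_deg x F" and "zdeg x b = lead_deg x G"
  using assms lead_deg_le[of a F x] lead_deg_le[of b G x]
  by (auto simp: factorizations_def zdeg_add)

lemma rterm_mult_le:
  assumes "zdeg x m = lead_deg x F + lead_deg x G"
  shows "rterm x (F * G) m \<preceq> lead_val x F * lead_val x G"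
  unfolding rterm_mult
proof (rule sum_qle, clarify)
  fix a b assume ab: "(a, b) \<in> factorizations F G m"
  with factorization_lead_deg[OF ab assms] show "rterm x F a * rterm x G b \<preceq> lead_val x F * lead_val x G"
    by (intro qle_mult_mono rterm_le_lead_val) (auto simp: factorizations_def)
qed

lemma rterm_mult_lead:
  assumes "a \<in> lead_mons x F" "b \<in> lead_mons x G"
  shows "rterm x (F * G) (a + b) = lead_val x F * lead_val x G"
proof (rule qle_antisym)
  show "rterm x (F * G) (a + b) \<preceq> lead_val x F * lead_val x G"
    using assms by (intro rterm_mult_le) (auto simp: lead_mons_def zdeg_add)
  have "(a, b) \<in> factorizations F G (a + b)" using assms by (auto simp: factorizations_def lead_mons_def)
  from qle_sum[OF finite_factorizations this, of "\<lambda>(a, b). rterm x F a * rterm x G b"]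
  show "lead_val x F * lead_val x G \<preceq> rterm x (F * G) (a + b)"
    using assms unfolding rterm_mult lead_mons_def by auto
qed

lemma lead_sum_in_keys:
  assumes "F \<noteq> 0" "G \<noteq> 0" "a \<in> lead_mons x F" "b \<in> lead_mons x G"
  shows "a + b \<in> Poly_Mapping.keys (F * G)"
  using rterm_mult_lead[OF assms(3,4)] lead_val_nonzero[OF assms(1)] lead_val_nonzero[OF assms(2)]
  by (auto simp: rterm_def in_keys_iff mult_nonzero)

text \<open>Conversely, a monomial of F * G attaining the maximal value splits into leading
  monomials; this is where totality of the order is needed.\<close>

lemma rterm_mult_lead_split:
  assumes tot: "totally_ordered_qf TYPE('a)"
    and nonzero: "(F::('n::finite, 'a::quasi_field_char1) mpoly) \<noteq> 0" "G \<noteq> 0"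
    and deg: "zdeg x m = lead_deg x F + lead_deg x G"
    and val: "rterm x (F * G) m = lead_val x F * lead_val x G"
  shows "m \<in> lead_mons x F + lead_mons x G"
proof -
  have "lead_val x F * lead_val x G \<noteq> 0" using nonzero lead_val_nonzero mult_nonzero by metis
  then have "factorizations F G m \<noteq> {}" using val unfolding rterm_mult by force
  then obtain a b where ab: "(a, b) \<in> factorizations F G m"
    and single: "rterm x (F * G) m = rterm x F a * rterm x G b"
    using sum_attained[OF tot finite_factorizations, of F G m "\<lambda>(a, b). rterm x F a * rterm x G b"]
    unfolding rterm_mult by auto
  note degs = factorization_lead_deg[OF ab deg]
  have "rterm x F a = lead_val x F \<and> rterm x G b = lead_val x G"
    using ab degs val single nonzero
    by (intro qle_mult_eq rterm_le_lead_val lead_val_nonzero) (auto simp: factorizations_def)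
  then have "a \<in> lead_mons x F" "b \<in> lead_mons x G"
    using ab degs by (auto simp: lead_mons_def factorizations_def)
  moreover have "m = a + b" using ab by (simp add: factorizations_def)
  ultimately show ?thesis by blast
qed

lemma mult_nonzero_mpoly:
  assumes "totally_ordered_qf TYPE('a)" "(F::('n::finite, 'a::quasi_field_char1) mpoly) \<noteq> 0" "G \<noteq> 0"
  shows "F * G \<noteq> 0"
  using lead_mons_nonempty[OF assms(1,2)] lead_mons_nonempty[OF assms(1,3)] lead_sum_in_keys[OF assms(2,3)]
  by fastforce

lemma lead_deg_mult:
  assumes "totally_ordered_qf TYPE('a)" "(F::('n::finite, 'a::quasi_field_char1) mpoly) \<noteq> 0" "G \<noteq> 0"
  shows "lead_deg x (F * G) = lead_deg x F + lead_deg x G"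
proof -
  obtain a b where ab: "a \<in> lead_mons x F" "b \<in> lead_mons x G"
    using lead_mons_nonempty[OF assms(1,2)] lead_mons_nonempty[OF assms(1,3)] by blast
  have "a + b \<in> Poly_Mapping.keys (F * G)" using lead_sum_in_keys[OF assms(2,3) ab] .
  moreover have "zdeg x (a + b) = lead_deg x F + lead_deg x G"
    using ab by (simp add: lead_mons_def zdeg_add)
  ultimately have "lead_deg x F + lead_deg x G \<in> zdeg x ` Poly_Mapping.keys (F * G)" by force
  then show ?thesis
    using lead_deg_le_mult unfolding lead_deg_def[of x "F * G"] by (intro Min_eqI) auto
qed

lemma lead_val_mult:
  assumes "totally_ordered_qf TYPE('a)" "(F::('n::finite, 'a::quasi_field_char1) mpoly) \<noteq> 0" "G \<noteq> 0"
  shows "lead_val x (F * G) = lead_val x F * lead_val x G"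
proof (rule qle_antisym)
  show "lead_val x (F * G) \<preceq> lead_val x F * lead_val x G"
    unfolding lead_val_def[of x "F * G"] using rterm_mult_le lead_deg_mult[OF assms] by (intro sum_qle) auto
  obtain a b where ab: "a \<in> lead_mons x F" "b \<in> lead_mons x G"
    using lead_mons_nonempty[OF assms(1,2)] lead_mons_nonempty[OF assms(1,3)] by blast
  have "a + b \<in> {m\<in>Poly_Mapping.keys (F * G). zdeg x m = lead_deg x (F * G)}"
    using lead_sum_in_keys[OF assms(2,3) ab] ab lead_deg_mult[OF assms]
    by (simp add: lead_mons_def zdeg_add)
  from qle_sum[OF _ this, of "rterm x (F * G)"]
  show "lead_val x F * lead_val x G \<preceq> lead_val x (F * G)"
    unfolding lead_val_def[of x "F * G"] rterm_mult_lead[OF ab] by simp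
qed

lemma lead_mons_mult:
  assumes "totally_ordered_qf TYPE('a)" "(F::('n::finite, 'a::quasi_field_char1) mpoly) \<noteq> 0" "G \<noteq> 0"
  shows "lead_mons x (F * G) = lead_mons x F + lead_mons x G"
proof
  show "lead_mons x (F * G) \<subseteq> lead_mons x F + lead_mons x G"
    using rterm_mult_lead_split[OF assms] lead_deg_mult[OF assms] lead_val_mult[OF assms]
    by (auto simp: lead_mons_def)
  show "lead_mons x F + lead_mons x G \<subseteq> lead_mons x (F * G)"
  proof
    fix m assume "m \<in> lead_mons x F + lead_mons x G"
    then obtain a b where ab: "a \<in> lead_mons x F" "b \<in> lead_mons x G" and m: "m = a + b"
      by (auto elim: set_plus_elim)
    then show "m \<in> lead_mons x (F * G)"
      using lead_sum_in_keys[OF assms(2,3) ab] rterm_mult_lead[OF ab]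
        lead_deg_mult[OF assms] lead_val_mult[OF assms]
      by (auto simp: lead_mons_def zdeg_add)
  qed
qed


subsection \<open>Zeros in terms of the leading data\<close>

text \<open>Being a zero only depends on how the monomials of F are split into two classes.\<close>

definition restrict_mons :: "('n \<Rightarrow>\<^sub>0 nat) set \<Rightarrow> ('n, 'a::zero) mpoly \<Rightarrow> ('n, 'a) mpoly" where
  "restrict_mons S F = Abs_poly_mapping (\<lambda>m. if m \<in> S then Poly_Mapping.lookup F m else 0)"

lemma lookup_restrict_mons: "Poly_Mapping.lookup (restrict_mons S F) m = (if m \<in> S then Poly_Mapping.lookup F m else 0)"
proof -
  have "finite {m. (if m \<in> S then Poly_Mapping.lookup F m else 0) \<noteq> 0}"
    by (rule finite_subset[OF _ finite_keys[of F]]) (auto simp: in_keys_iff split: if_splits)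
  then show ?thesis by (simp add: restrict_mons_def)
qed

lemma keys_restrict_mons: "Poly_Mapping.keys (restrict_mons S F) = Poly_Mapping.keys F \<inter> S"
  by (auto simp: in_keys_iff lookup_restrict_mons split: if_splits)

lemma peval_restrict_mons:
  "S \<subseteq> Poly_Mapping.keys F \<Longrightarrow> peval (restrict_mons S F) x = (\<Sum>m\<in>S. term_value x F m)"
  by (auto simp: peval_def keys_restrict_mons lookup_restrict_mons term_value_def
           Int_absorb1 intro: sum.cong)

lemma is_zero_of_iff_split:
  "is_zero_of x F \<longleftrightarrow> (\<exists>S\<subseteq>Poly_Mapping.keys F.
     (\<Sum>m\<in>S. term_value x F m) = (\<Sum>m\<in>Poly_Mapping.keys F - S. term_value x F m))"
  (is "_ \<longleftrightarrow> (\<exists>S\<subseteq>_. ?balanced S)")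
proof
  assume "is_zero_of x F"
  then obtain P1 P2 where F: "F = P1 + P2" and disj: "Poly_Mapping.keys P1 \<inter> Poly_Mapping.keys P2 = {}"
    and eq: "peval P1 x = peval P2 x" unfolding is_zero_of_def by blast
  have P2_off: "Poly_Mapping.lookup P2 m = 0" if "m \<in> Poly_Mapping.keys P1" for m
    using that disj by (auto simp: in_keys_iff)
  have P1_off: "Poly_Mapping.lookup P1 m = 0" if "m \<in> Poly_Mapping.keys P2" for m
    using that disj by (auto simp: in_keys_iff)
  have keys_F: "Poly_Mapping.keys F = Poly_Mapping.keys P1 \<union> Poly_Mapping.keys P2"
    using F P1_off P2_off by (auto simp: in_keys_iff lookup_add)
  have "peval P1 x = (\<Sum>m\<in>Poly_Mapping.keys P1. term_value x F m)"
    using F P2_off by (auto simp: peval_def term_value_def lookup_add intro!: sum.cong)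
  moreover have "Poly_Mapping.keys F - Poly_Mapping.keys P1 = Poly_Mapping.keys P2"
    using keys_F disj by blast
  moreover have "peval P2 x = (\<Sum>m\<in>Poly_Mapping.keys P2. term_value x F m)"
    using F P1_off by (auto simp: peval_def term_value_def lookup_add intro!: sum.cong)
  ultimately have "?balanced (Poly_Mapping.keys P1)" using eq by simp
  then show "\<exists>S\<subseteq>Poly_Mapping.keys F. ?balanced S" using keys_F by blast
next
  assume "\<exists>S\<subseteq>Poly_Mapping.keys F. ?balanced S"
  then obtain S where S: "S \<subseteq> Poly_Mapping.keys F" and eq: "?balanced S" by blast
  have "F = restrict_mons S F + restrict_mons (Poly_Mapping.keys F - S) F"
    by (rule poly_mapping_eqI) (auto simp: lookup_add lookup_restrict_mons in_keys_iff)
  moreover have "Poly_Mapping.keys (restrict_mons S F) \<inter>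
      Poly_Mapping.keys (restrict_mons (Poly_Mapping.keys F - S) F) = {}"
    by (auto simp: keys_restrict_mons)
  moreover have "peval (restrict_mons S F) x = peval (restrict_mons (Poly_Mapping.keys F - S) F) x"
    using S eq by (simp add: peval_restrict_mons)
  ultimately show "is_zero_of x F" unfolding is_zero_of_def by blast
qed

lemma sum_term_value_lead:
  assumes tot: "totally_ordered_qf TYPE('a)"
    and F: "(F::('n::finite, 'a::quasi_field_char1) mpoly) \<noteq> 0"
    and deg: "lead_deg x F = 0" and S: "S \<subseteq> Poly_Mapping.keys F"
  shows "(\<Sum>m\<in>S. term_value x F m) = lead_val x F \<longleftrightarrow> S \<inter> lead_mons x F \<noteq> {}"
proof -
  have le: "term_value x F m \<preceq> lead_val x F" if "m \<in> Poly_Mapping.keys F" for m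
    using that deg rterm_le_lead_val[of m F x] by (simp add: term_value_rterm zero_qle)
  have lead: "term_value x F m = lead_val x F \<longleftrightarrow> m \<in> lead_mons x F" if "m \<in> Poly_Mapping.keys F" for m
    using that deg lead_deg_le[OF that, of x] lead_val_nonzero[OF F, of x]
    by (auto simp: term_value_rterm lead_mons_def)
  have fin: "finite S" using S finite_keys by (rule finite_subset)
  show ?thesis
  proof
    assume eq: "(\<Sum>m\<in>S. term_value x F m) = lead_val x F"
    then have "S \<noteq> {}" using lead_val_nonzero[OF F, of x] by auto
    then obtain m where "m \<in> S" "(\<Sum>m\<in>S. term_value x F m) = term_value x F m"
      using sum_attained[OF tot fin] by blast
    then show "S \<inter> lead_mons x F \<noteq> {}" using eq lead S by auto
  next
    assume "S \<inter> lead_mons x F \<noteq> {}"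
    then obtain m where m: "m \<in> S" "m \<in> lead_mons x F" by blast
    show "(\<Sum>m\<in>S. term_value x F m) = lead_val x F"
    proof (rule qle_antisym)
      show "(\<Sum>m\<in>S. term_value x F m) \<preceq> lead_val x F" using le S by (intro sum_qle) auto
      have "term_value x F m = lead_val x F" using lead m S by auto
      then show "lead_val x F \<preceq> (\<Sum>m\<in>S. term_value x F m)"
        using qle_sum[OF fin m(1), of "term_value x F"] by simp
    qed
  qed
qed

lemma is_zero_of_iff_lead:
  assumes tot: "totally_ordered_qf TYPE('a)"
  shows "is_zero_of x (F::('n::finite, 'a::quasi_field_char1) mpoly) \<longleftrightarrow>
    \<not> (lead_deg x F = 0 \<and> (\<exists>t. lead_mons x F = {t}))"
proof (cases "F \<noteq> 0 \<and> lead_deg x F = 0")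
  case False
  \<comment> \<open>every term vanishes at x, so the empty split balances\<close>
  then have "term_value x F m = 0" if "m \<in> Poly_Mapping.keys F" for m
    using that lead_deg_le[OF that, of x] by (auto simp: term_value_rterm)
  then have "is_zero_of x F" unfolding is_zero_of_iff_split by (intro exI[of _ "{}"]) simp
  moreover note lead_mons_zero
  ultimately show ?thesis using False by auto
next
  case True
  note sums = sum_term_value_lead[OF tot conjunct1[OF True] conjunct2[OF True]]
  show ?thesis
  proof
    assume zero: "is_zero_of x F"
    show "\<not> (lead_deg x F = 0 \<and> (\<exists>t. lead_mons x F = {t}))"
    proof
      assume "lead_deg x F = 0 \<and> (\<exists>t. lead_mons x F = {t})"
      then obtain t where t: "lead_mons x F = {t}" by blast
      obtain S where "S \<subseteq> Poly_Mapping.keys F"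
        and "(\<Sum>m\<in>S. term_value x F m) = (\<Sum>m\<in>Poly_Mapping.keys F - S. term_value x F m)"
        using zero unfolding is_zero_of_iff_split by blast
      moreover have "t \<in> Poly_Mapping.keys F" using t lead_mons_keys by blast
      ultimately show False using sums[of S] sums[of "Poly_Mapping.keys F - S"] t by auto
    qed
  next
    assume "\<not> (lead_deg x F = 0 \<and> (\<exists>t. lead_mons x F = {t}))"
    moreover have "lead_mons x F \<noteq> {}" using lead_mons_nonempty[OF tot] True by blast
    ultimately obtain t1 t2 where t: "t1 \<in> lead_mons x F" "t2 \<in> lead_mons x F" "t1 \<noteq> t2"
      using True by blast
    then have "{t1} \<subseteq> Poly_Mapping.keys F" "t2 \<in> Poly_Mapping.keys F - {t1}" using lead_mons_keys by auto
    then show "is_zero_of x F"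
      unfolding is_zero_of_iff_split using sums[of "{t1}"] sums[of "Poly_Mapping.keys F - {t1}"] t
      by (intro exI[of _ "{t1}"]) auto
  qed
qed


subsection \<open>Cancellation of Minkowski sums of exponent vectors\<close>

text \<open>Translating a finite nonempty set of exponent vectors into a translate of itself
  forces the two translation vectors to agree (compare the coordinate sums).\<close>

lemma translate_subset_eq:
  fixes A :: "('n \<Rightarrow>\<^sub>0 nat) set"
  assumes fin: "finite A" and ne: "A \<noteq> {}" and sub: "(\<lambda>a. a + b) ` A \<subseteq> (\<lambda>a. a + c) ` A"
  shows "b = c"
proof -
  have inj: "inj_on (\<lambda>a. a + d) A" for d :: "'n \<Rightarrow>\<^sub>0 nat" by (rule inj_onI) simp
  have "card ((\<lambda>a. a + b) ` A) = card ((\<lambda>a. a + c) ` A)"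
    by (simp add: card_image[OF inj])
  then have "(\<lambda>a. a + b) ` A = (\<lambda>a. a + c) ` A"
    using card_subset_eq[OF finite_imageI[OF fin] sub] by simp
  moreover have coord_sum: "(\<Sum>y\<in>(\<lambda>a. a + d) ` A. Poly_Mapping.lookup y i) = (\<Sum>a\<in>A. Poly_Mapping.lookup a i) + card A * Poly_Mapping.lookup d i"
    for d i by (simp add: sum.reindex[OF inj] lookup_add sum.distrib)
  moreover have "card A > 0" using fin ne by (simp add: card_gt_0_iff)
  ultimately have "Poly_Mapping.lookup b i = Poly_Mapping.lookup c i" for i
    using coord_sum[where d = b] coord_sum[where d = c] by simp
  then show ?thesis by (rule poly_mapping_eqI)
qed

lemma set_plus_cancel_singleton:
  fixes A B :: "('n \<Rightarrow>\<^sub>0 nat) set"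
  assumes "finite A" "A \<noteq> {}" "A + B = A + {c}"
  shows "B \<subseteq> {c}"
proof
  fix b assume "b \<in> B"
  have "a + b \<in> (\<lambda>a. a + c) ` A" if "a \<in> A" for a
  proof -
    have "a + b \<in> A + {c}" using assms(3) that \<open>b \<in> B\<close> by (metis set_plus_intro)
    then show ?thesis by (auto simp: set_plus_def)
  qed
  then have "(\<lambda>a. a + b) ` A \<subseteq> (\<lambda>a. a + c) ` A" by blast
  then show "b \<in> {c}" using translate_subset_eq[OF assms(1,2)] by blast
qed


theorem proposition2p6:
  fixes P Q :: "('n::finite, 'a::quasi_field_char1) mpoly" and x :: "'n \<Rightarrow> 'a"
  assumes "totally_ordered_qf TYPE('a)"
    and "is_zero_of x P"
    and "\<exists>R. R \<noteq> 0 \<and> R * P = R * Q"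
  shows "is_zero_of x Q"
proof (rule ccontr)
  note tot = assms(1)
  assume "\<not> is_zero_of x Q"
  then obtain q where degQ: "lead_deg x Q = 0" and lmQ: "lead_mons x Q = {q}"
    using is_zero_of_iff_lead[OF tot, of x Q] by blast
  obtain R where R: "R \<noteq> 0" and RPQ: "R * P = R * Q" using assms(3) by blast
  have Q: "Q \<noteq> 0" using lmQ lead_mons_zero by (metis empty_not_insert)
  have P: "P \<noteq> 0" using mult_nonzero_mpoly[OF tot R Q] RPQ by (metis mult_zero_right)
  have "lead_deg x P = 0"
    using lead_deg_mult[OF tot R P] lead_deg_mult[OF tot R Q] RPQ degQ by simp
  moreover have "lead_mons x P = {q}"
  proof -
    have "lead_mons x R + lead_mons x P = lead_mons x R + {q}"
      using lead_mons_mult[OF tot R P, of x] lead_mons_mult[OF tot R Q, of x] RPQ lmQ by simp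
    then have "lead_mons x P \<subseteq> {q}"
      by (rule set_plus_cancel_singleton[OF finite_lead_mons lead_mons_nonempty[OF tot R]])
    then show ?thesis using lead_mons_nonempty[OF tot P] by blast
  qed
  ultimately show False using assms(2) is_zero_of_iff_lead[OF tot, of x P] by blast
qed

end
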